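(* For $s\geq0$ let $(G_s,\varphi)$ be as in the context, with induced metric having scalar curvature $\mathrm{scal}_s$ and Ricci operator $\mathrm{Ric}_s$, and let $F(s)=\mathrm{scal}_s^2/|\mathrm{Ric}_s|^2$. Then $F(s)=\dfrac{(75+64s^2)^2}{1725+4224s^2+4096s^4}$, and: (a) on $[0,\infty)$, $F$ attains its maximum at $s=0$, with $F(0)=\tfrac{75}{23}>3$; (b) at $s=\tfrac{\sqrt{15}}8$ (the value for which $(G_s,\varphi)$ is a steady Laplacian soliton), $F(s)=\tfrac{135}{49}$; (c) at $s=\tfrac58$ (the value for which $(G_s,\langle\cdot,\cdot\rangle)$ is an expanding Ricci soliton), $F(s)=\tfrac52$.
   Context: For $s\in\mathbb R$, $\mathfrak g_s$ is the real Lie algebra with basis $\{e_1,\dots,e_7\}$ whose only nonzero brackets of basis elements (up to antisymmetry) are $[e_1,e_3]=-e_6$, $[e_1,e_4]=-e_5$, $[e_2,e_3]=-e_5$, $[e_7,e_i]=(A_s)_{ii}e_i$ ($i=1,\dots,6$), with $A_s=\mathrm{Diag}(\tfrac38+s,-\tfrac18+s,\tfrac38-s,-\tfrac18-s,\tfrac14,\tfrac34)$; $G_s$ is the simply connected Lie group with Lie algebra $\mathfrak g_s$, with left-invariant $G_2$-structure $\varphi=e^{127}+e^{347}+e^{567}+e^{135}-e^{146}-e^{236}-e^{245}$ ($\{e^i\}$ dual basis), whose induced left-invariant metric $\langle\cdot,\cdot\rangle$ makes $\{e_i\}$ orthonormal. $|\mathrm{Ric}_s|^2=\mathrm{tr}(\mathrm{Ric}_s^2)$.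 *)

theory Defs
  imports Complex_Main
begin

text \<open>Basis index set {1..7}. Vectors of the Lie algebra g_s are identified with
  coefficient functions w.r.t. the orthonormal basis e_1,...,e_7.\<close>

definition Adiag :: "real \<Rightarrow> nat \<Rightarrow> real" where
  "Adiag s i = (if i = 1 then 3/8 + s else if i = 2 then -1/8 + s
     else if i = 3 then 3/8 - s else if i = 4 then -1/8 - s
     else if i = 5 then 1/4 else if i = 6 then 3/4 else 0)"

text \<open>Structure constants: brk s i j k = <[e_i,e_j], e_k>.\<close>
definition brk :: "real \<Rightarrow> nat \<Rightarrow> nat \<Rightarrow> nat \<Rightarrow> real" where
  "brk s i j k =
    (if (i,j,k) = (1,3,6) then -1 else if (i,j,k) = (3,1,6) then 1
     else if (i,j,k) = (1,4,5) then -1 else if (i,j,k) = (4,1,5) then 1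
     else if (i,j,k) = (2,3,5) then -1 else if (i,j,k) = (3,2,5) then 1
     else if i = 7 \<and> 1 \<le> j \<and> j \<le> 6 \<and> k = j then Adiag s j
     else if j = 7 \<and> 1 \<le> i \<and> i \<le> 6 \<and> k = i then - Adiag s i
     else 0)"

text \<open>Levi-Civita connection of the left-invariant metric (Koszul formula):
  conn s i j k = <nabla_{e_i} e_j, e_k>.\<close>
definition conn :: "real \<Rightarrow> nat \<Rightarrow> nat \<Rightarrow> nat \<Rightarrow> real" where
  "conn s i j k = (brk s i j k - brk s j k i + brk s k i j) / 2"

text \<open>Curvature R(X,Y) = nabla_X nabla_Y - nabla_Y nabla_X - nabla_[X,Y]:
  curv s a b c d = <R(e_a,e_b) e_c, e_d>.\<close>
definition curv :: "real \<Rightarrow> nat \<Rightarrow> nat \<Rightarrow> nat \<Rightarrow> nat \<Rightarrow> real" where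
  "curv s a b c d =
     (\<Sum>k\<in>{1..7}. conn s b c k * conn s a k d)
   - (\<Sum>k\<in>{1..7}. conn s a c k * conn s b k d)
   - (\<Sum>k\<in>{1..7}. brk s a b k * conn s k c d)"

text \<open>Ricci tensor Ric(Y,Z) = tr(X \<mapsto> R(X,Y)Z); in the orthonormal basis this is also
  the matrix of the Ricci operator.\<close>
definition ric :: "real \<Rightarrow> nat \<Rightarrow> nat \<Rightarrow> real" where
  "ric s b c = (\<Sum>a\<in>{1..7}. curv s a b c a)"

definition scal :: "real \<Rightarrow> real" where
  "scal s = (\<Sum>i\<in>{1..7}. ric s i i)"

definition ric_norm2 :: "real \<Rightarrow> real" where
  "ric_norm2 s = (\<Sum>i\<in>{1..7}. \<Sum>j\<in>{1..7}. ric s i j * ric s j i)"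

definition F :: "real \<Rightarrow> real" where
  "F s = (scal s)^2 / ric_norm2 s"

end

theory Submission
  imports Defs
begin

text \<open>Evaluating the Koszul formula shows that the Ricci operator is diagonal in the
  orthonormal basis \<open>e\<^sub>1, \<dots>, e\<^sub>7\<close>. Its entries depending linearly on \<open>s\<close> come in
  pairs \<open>c \<mp> 3s/2\<close>, so the linear terms cancel in \<open>scal\<^sub>s\<close> and in \<open>|Ric\<^sub>s|\<^sup>2\<close>, which are
  polynomials in \<open>t = s\<^sup>2\<close>. Then
  \<open>75/23 - F(s) = 64 t (1500 + 3328 t) / (23 (1725 + 4224 t + 4096 t\<^sup>2)) \<ge> 0\<close>.\<close>

lemma sum_atLeastAtMost_1_7:
  "(\<Sum>k\<in>{1..7::nat}. f k) = f 1 + f 2 + f 3 + f 4 + f 5 + f 6 + f 7"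
  by (simp add: numeral_eq_Suc atLeastAtMostSuc_conv add.commute add.left_commute)

lemma atLeastAtMost_1_7_eq: "{1..7::nat} = {1, 2, 3, 4, 5, 6, 7}"
  by (auto simp: numeral_eq_Suc)

lemma sum_sum_mult_swap_diagonal:
  fixes M :: "'a \<Rightarrow> 'a \<Rightarrow> 'b::comm_semiring_1"
  assumes "finite I" and diagonal: "\<And>i j. i \<in> I \<Longrightarrow> j \<in> I \<Longrightarrow> i \<noteq> j \<Longrightarrow> M i j = 0"
  shows "(\<Sum>i\<in>I. \<Sum>j\<in>I. M i j * M j i) = (\<Sum>i\<in>I. (M i i)\<^sup>2)"
proof (rule sum.cong[OF refl])
  fix i assume "i \<in> I"
  then have "(\<Sum>j\<in>I. M i j * M j i) = M i i * M i i + (\<Sum>j\<in>I - {i}. M i j * M j i)"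
    using \<open>finite I\<close> by (simp add: sum.remove)
  also have "(\<Sum>j\<in>I - {i}. M i j * M j i) = 0"
    using \<open>i \<in> I\<close> diagonal by (intro sum.neutral) auto
  finally show "(\<Sum>j\<in>I. M i j * M j i) = (M i i)\<^sup>2"
    by (simp add: power2_eq_square)
qed

lemma ric_diagonal_entries:
  "ric s 1 1 = -25/16 - 3/2 * s"
  "ric s 2 2 = -5/16 - 3/2 * s"
  "ric s 3 3 = -25/16 + 3/2 * s"
  "ric s 4 4 = -5/16 + 3/2 * s"
  "ric s 5 5 = 5/8"
  "ric s 6 6 = -5/8"
  "ric s 7 7 = -15/16 - 4 * s\<^sup>2"
  unfolding ric_def curv_def conn_def sum_atLeastAtMost_1_7
  by (simp_all add: brk_def Adiag_def field_simps power2_eq_square)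

lemma ric_off_diagonal:
  assumes "i \<in> {1..7}" and "j \<in> {1..7}" and "i \<noteq> j"
  shows "ric s i j = 0"
  using assms unfolding atLeastAtMost_1_7_eq ric_def curv_def conn_def sum_atLeastAtMost_1_7
  by (auto simp: brk_def Adiag_def)

lemma scal_eq: "scal s = - (75 + 64 * s\<^sup>2) / 16"
  unfolding scal_def sum_atLeastAtMost_1_7 ric_diagonal_entries by simp

lemma ric_norm2_eq: "ric_norm2 s = (1725 + 4224 * s\<^sup>2 + 4096 * s^4) / 256"
proof -
  have "ric_norm2 s = (\<Sum>i\<in>{1..7}. (ric s i i)\<^sup>2)"
    unfolding ric_norm2_def by (rule sum_sum_mult_swap_diagonal) (auto intro: ric_off_diagonal)
  also have "\<dots> = (1725 + 4224 * s\<^sup>2 + 4096 * s^4) / 256"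
    unfolding sum_atLeastAtMost_1_7 ric_diagonal_entries
    by (simp add: field_simps power2_eq_square power4_eq_xxxx)
  finally show ?thesis .
qed

lemma F_eq: "F s = (75 + 64 * s\<^sup>2)\<^sup>2 / (1725 + 4224 * s\<^sup>2 + 4096 * s^4)"
  unfolding F_def scal_eq ric_norm2_eq power_divide power2_minus by simp

lemma F_0: "F 0 = 75/23"
  unfolding F_eq by simp

lemma F_le_F_0: "F s \<le> F 0"
proof -
  define t where "t = s\<^sup>2"
  have "t \<ge> 0"
    unfolding t_def by simp
  have F_t: "F s = (75 + 64 * t)\<^sup>2 / (1725 + 4224 * t + 4096 * t\<^sup>2)"
    unfolding F_eq t_def by (simp add: power4_eq_xxxx power2_eq_square)
  have denominator_pos: "0 < 1725 + 4224 * t + 4096 * t\<^sup>2"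
    using \<open>t \<ge> 0\<close> by (simp add: add_pos_nonneg)
  have "75 * (1725 + 4224 * t + 4096 * t\<^sup>2) - 23 * (75 + 64 * t)\<^sup>2 = 64 * t * (1500 + 3328 * t)"
    by (simp add: power2_eq_square algebra_simps)
  also have "\<dots> \<ge> 0"
    using \<open>t \<ge> 0\<close> by simp
  finally have "23 * (75 + 64 * t)\<^sup>2 \<le> 75 * (1725 + 4224 * t + 4096 * t\<^sup>2)"
    by simp
  with denominator_pos show ?thesis
    unfolding F_t F_0 by (simp add: divide_le_eq field_simps)
qed

theorem corollary4p12:
  shows "(\<forall>s::real. s \<ge> 0 \<longrightarrow>
            F s = (75 + 64 * s^2)^2 / (1725 + 4224 * s^2 + 4096 * s^4))
       \<and> (\<forall>s::real. s \<ge> 0 \<longrightarrow> F s \<le> F 0) \<and> F 0 = 75/23 \<and> (75/23::real) > 3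
       \<and> F (sqrt 15 / 8) = 135/49
       \<and> F (5/8) = 5/2"
proof -
  have "(sqrt 15 / 8)\<^sup>2 = (15/64 :: real)"
    by (simp add: power_divide)
  then have steady_Laplacian_soliton: "F (sqrt 15 / 8) = 135/49"
    unfolding F_eq by (simp add: power4_eq_xxxx power2_eq_square)
  have expanding_Ricci_soliton: "F (5/8) = 5/2"
    unfolding F_eq by (simp add: power4_eq_xxxx power2_eq_square)
  show ?thesis
    using F_eq F_le_F_0 F_0 steady_Laplacian_soliton expanding_Ricci_soliton by simp
qed

end
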